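(* Let $X=\{\{k\}:k\in\mathbb{Z}\}\cup\{\{k,k+1\}:k\in\mathbb{Z}\}$ be the infinite $1$-dimensional simplicial complex of the integer line. Consider the operators $L$ and $|H|$ on $\ell^2(X)$, defined in the context. Then $L$ is a bounded operator, it is invertible with bounded inverse $L^{-1}$, and $$|H|=L-L^{-1}.$$
   Context: The operator $L$ on $\ell^2(X)$ is given by the matrix $L(x,y)=1$ if $x\cap y\neq\emptyset$ and $L(x,y)=0$ otherwise, for $x,y\in X$. The sign-less exterior derivative $|d|$ is given by the matrix $|d|(x,y)=1$ if $y\subset x$ and $|x|=|y|+1$, and $0$ otherwise. The operator $|H|$ is defined as $|H|=(|d|+|d|^* )^2$. All matrices have finitely many nonzero entries in each row and column, with uniformly bounded entries. *)

theory Defs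
  imports "HOL-Analysis.Analysis"
begin

definition X :: "int set set" where
  "X = range (\<lambda>k. {k}) \<union> range (\<lambda>k. {k, k + 1})"

type_synonym mat = "int set \<Rightarrow> int set \<Rightarrow> real"

definition Lmat :: mat where
  "Lmat x y = (if x \<inter> y \<noteq> {} then 1 else 0)"

definition absd :: mat where
  "absd x y = (if y \<subset> x \<and> card x = card y + 1 then 1 else 0)"

definition mat_adj :: "mat \<Rightarrow> mat" where
  "mat_adj M x y = M y x"

definition mat_plus :: "mat \<Rightarrow> mat \<Rightarrow> mat" where
  "mat_plus M N x y = M x y + N x y"

text \<open>Matrix product over the index set X (rows/columns are finitely supported).\<close>
definition mat_mult :: "mat \<Rightarrow> mat \<Rightarrow> mat" where
  "mat_mult M N x z = (\<Sum>\<^sub>\<infinity>y\<in>X. M x y * N y z)"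

definition absH :: mat where
  "absH = (let D = mat_plus absd (mat_adj absd) in mat_mult D D)"

definition ell2X :: "(int set \<Rightarrow> real) set" where
  "ell2X = {f. (\<forall>x. x \<notin> X \<longrightarrow> f x = 0) \<and> (\<lambda>x. (f x)\<^sup>2) summable_on X}"

definition ell2_norm :: "(int set \<Rightarrow> real) \<Rightarrow> real" where
  "ell2_norm f = sqrt (\<Sum>\<^sub>\<infinity>x\<in>X. (f x)\<^sup>2)"

definition mat_app :: "mat \<Rightarrow> (int set \<Rightarrow> real) \<Rightarrow> (int set \<Rightarrow> real)" where
  "mat_app M f x = (if x \<in> X then (\<Sum>\<^sub>\<infinity>y\<in>X. M x y * f y) else 0)"

definition bounded_op :: "((int set \<Rightarrow> real) \<Rightarrow> (int set \<Rightarrow> real)) \<Rightarrow> bool" where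
  "bounded_op T \<longleftrightarrow>
     (\<forall>f\<in>ell2X. T f \<in> ell2X) \<and>
     (\<forall>f\<in>ell2X. \<forall>g\<in>ell2X. \<forall>a b. T (\<lambda>x. a * f x + b * g x) = (\<lambda>x. a * T f x + b * T g x)) \<and>
     (\<exists>C. \<forall>f\<in>ell2X. ell2_norm (T f) \<le> C * ell2_norm f)"

end

theory Submission
  imports Defs
begin

text \<open>Enumerate \<open>X\<close> by the integers, putting the vertex \<open>{k}\<close> at \<open>2k\<close> and the edge
  \<open>{k, k+1}\<close> at \<open>2k+1\<close>, so that incident simplices get adjacent indices. In these coordinates
  \<open>|d| + |d|\<^sup>*\<close> is the adjacency matrix of the path \<open>\<int>\<close>, hence \<open>|H|\<close> has 2 on the diagonal and 1
  at distance 2, while \<open>L\<close> couples each index with its neighbours and, at an edge, also with the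
  two neighbouring edges. Both are banded, and every banded matrix with bounded entries is bounded
  on \<open>\<ell>\<^sup>2\<close>. Finally the explicit banded operator \<open>L - |H|\<close> is a two-sided inverse of \<open>L\<close>,
  which can be checked index by index.\<close>

definition line_simplex :: "int \<Rightarrow> int set" where
  "line_simplex i = (if even i then {i div 2} else {i div 2, i div 2 + 1})"

lemma line_simplex_even [simp]: "line_simplex (2 * k) = {k}"
  by (simp add: line_simplex_def)

lemma line_simplex_odd [simp]: "line_simplex (2 * k + 1) = {k, k + 1}"
  by (simp add: line_simplex_def)

lemma int_parity_cases:
  fixes i :: int
  obtains k where "i = 2 * k" | k where "i = 2 * k + 1"
  by (metis evenE oddE)

lemma inj_line_simplex: "inj line_simplex"
proof (rule injI)
  fix i j assume eq: "line_simplex i = line_simplex j"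
  show "i = j"
    by (cases i rule: int_parity_cases; cases j rule: int_parity_cases)
      (use eq in \<open>auto simp: doubleton_eq_iff dest: arg_cong[where f = card]\<close>)
qed

lemma X_eq_range_line_simplex: "X = range line_simplex"
proof (intro equalityI subsetI)
  fix x assume "x \<in> X"
  then obtain k where "x = {k} \<or> x = {k, k + 1}"
    by (auto simp: X_def)
  then show "x \<in> range line_simplex"
    by (metis line_simplex_even line_simplex_odd rangeI)
next
  fix x assume "x \<in> range line_simplex"
  then obtain i where "x = line_simplex i"
    by auto
  then show "x \<in> X"
    by (cases i rule: int_parity_cases) (auto simp: X_def)
qed

lemma line_simplex_in_X [simp]: "line_simplex i \<in> X"
  by (simp add: X_eq_range_line_simplex)

lemma X_line_simplexE:
  assumes "x \<in> X"
  obtains i where "x = line_simplex i"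
  using assms by (auto simp: X_eq_range_line_simplex)

lemma summable_on_X_iff: "g summable_on X \<longleftrightarrow> (\<lambda>i. g (line_simplex i)) summable_on UNIV"
  by (simp add: X_eq_range_line_simplex summable_on_reindex[OF inj_line_simplex] o_def)

lemma infsum_X: "(\<Sum>\<^sub>\<infinity>x\<in>X. g x) = (\<Sum>\<^sub>\<infinity>i. g (line_simplex i))"
  by (simp add: X_eq_range_line_simplex infsum_reindex[OF inj_line_simplex] o_def)

lemma infsum_X_banded:
  fixes M :: mat
  assumes "\<And>j. w < \<bar>i - j\<bar> \<Longrightarrow> M (line_simplex i) (line_simplex j) = 0"
  shows "(\<Sum>\<^sub>\<infinity>y\<in>X. M (line_simplex i) y * f y) =
    (\<Sum>j=i-w..i+w. M (line_simplex i) (line_simplex j) * f (line_simplex j))"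
proof -
  have "(\<Sum>\<^sub>\<infinity>y\<in>X. M (line_simplex i) y * f y) =
      (\<Sum>\<^sub>\<infinity>j. M (line_simplex i) (line_simplex j) * f (line_simplex j))"
    by (rule infsum_X)
  also have "\<dots> = (\<Sum>\<^sub>\<infinity>j\<in>{i-w..i+w}. M (line_simplex i) (line_simplex j) * f (line_simplex j))"
    by (rule infsum_cong_neutral) (auto simp: assms)
  finally show ?thesis
    by simp
qed

lemma sum_int_window_1:
  fixes i :: int
  shows "(\<Sum>j=i-1..i+1. g j) = g (i - 1) + g i + g (i + 1)"
proof -
  have "{i-1..i+1} = {i - 1, i, i + 1}"
    by auto
  then show ?thesis
    by (simp add: add.assoc)
qed

lemma sum_int_window_2:
  fixes i :: int
  shows "(\<Sum>j=i-2..i+2. g j) = g (i - 2) + g (i - 1) + g i + g (i + 1) + g (i + 2)"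
proof -
  have "{i-2..i+2} = {i - 2, i - 1, i, i + 1, i + 2}"
    by auto
  then show ?thesis
    by (simp add: add.assoc)
qed

lemma sum_int_window_shift:
  fixes G :: "int \<Rightarrow> 'a::comm_monoid_add"
  shows "(\<Sum>j=i-w..i+w. G j) = (\<Sum>d=-w..w. G (i + d))"
  by (rule sum.reindex_bij_witness[of _ "\<lambda>d. i + d" "\<lambda>j. j - i"]) auto

lemma Lmat_line_simplex:
  "Lmat (line_simplex i) (line_simplex j) = (if \<bar>i - j\<bar> \<le> 1 \<or> \<bar>i - j\<bar> = 2 \<and> odd i then 1 else 0)"
  by (cases i rule: int_parity_cases; cases j rule: int_parity_cases; auto simp: Lmat_def abs_if)

lemma vertex_psubset_edge_iff: "{b} \<subset> {a, a + 1} \<longleftrightarrow> b = a \<or> b = a + 1" for a b :: int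
  by auto

lemma absd_line_simplex:
  "absd (line_simplex i) (line_simplex j) = (if odd i \<and> \<bar>i - j\<bar> = 1 then 1 else 0)"
  by (cases i rule: int_parity_cases; cases j rule: int_parity_cases;
      auto simp: absd_def vertex_psubset_edge_iff abs_if simp del: insert_subset; presburger)

lemma dirac_line_simplex:
  "mat_plus absd (mat_adj absd) (line_simplex i) (line_simplex j) = (if \<bar>i - j\<bar> = 1 then 1 else 0)"
  by (auto simp: mat_plus_def mat_adj_def absd_line_simplex abs_if; presburger)

lemma absH_line_simplex:
  "absH (line_simplex i) (line_simplex j) = (if i = j then 2 else if \<bar>i - j\<bar> = 2 then 1 else 0)"
proof -
  define D where "D = mat_plus absd (mat_adj absd)"
  have "absH (line_simplex i) (line_simplex j) = (\<Sum>\<^sub>\<infinity>y\<in>X. D (line_simplex i) y * D y (line_simplex j))"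
    by (simp add: absH_def mat_mult_def D_def Let_def)
  also have "\<dots> = (\<Sum>k=i-1..i+1. D (line_simplex i) (line_simplex k) * D (line_simplex k) (line_simplex j))"
    by (rule infsum_X_banded) (simp add: D_def dirac_line_simplex)
  finally show ?thesis
    by (auto simp: sum_int_window_1 D_def dirac_line_simplex abs_if)
qed

lemma has_sum_finite_sum:
  fixes g :: "'i \<Rightarrow> 'a \<Rightarrow> 'b::{topological_comm_monoid_add, t2_space}"
  assumes "finite I" and "\<And>d. d \<in> I \<Longrightarrow> g d summable_on A"
  shows "((\<lambda>x. \<Sum>d\<in>I. g d x) has_sum (\<Sum>d\<in>I. \<Sum>\<^sub>\<infinity>x\<in>A. g d x)) A"
  using assms by (induction I rule: finite_induct) (simp_all add: has_sum_add)

lemma bij_int_shift: "bij (\<lambda>i::int. i + d)"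
  by (auto simp: bij_betw_def inj_on_def intro: image_eqI[where x = "_ - d"])

lemma window_sum_summable_on:
  fixes G :: "int \<Rightarrow> real"
  assumes "G summable_on UNIV"
  shows "(\<lambda>i. \<Sum>j=i-int w..i+int w. G j) summable_on UNIV"
    and "(\<Sum>\<^sub>\<infinity>i. \<Sum>j=i-int w..i+int w. G j) = (2 * real w + 1) * (\<Sum>\<^sub>\<infinity>i. G i)"
proof -
  have "((\<lambda>i. \<Sum>d=-int w..int w. G (i + d)) has_sum (\<Sum>d=-int w..int w. \<Sum>\<^sub>\<infinity>i. G (i + d))) UNIV"
    by (rule has_sum_finite_sum)
      (simp_all add: summable_on_reindex_bij_betw[OF bij_int_shift] assms)
  moreover have "(\<Sum>d=-int w..int w. \<Sum>\<^sub>\<infinity>i. G (i + d)) = (2 * real w + 1) * (\<Sum>\<^sub>\<infinity>i. G i)"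
    by (simp add: infsum_reindex_bij_betw[OF bij_int_shift])
  ultimately show "(\<lambda>i. \<Sum>j=i-int w..i+int w. G j) summable_on UNIV"
    and "(\<Sum>\<^sub>\<infinity>i. \<Sum>j=i-int w..i+int w. G j) = (2 * real w + 1) * (\<Sum>\<^sub>\<infinity>i. G i)"
    by (simp_all add: has_sum_iff sum_int_window_shift)
qed

lemma bounded_op_banded:
  fixes T :: "(int set \<Rightarrow> real) \<Rightarrow> int set \<Rightarrow> real" and w :: nat
  assumes vanishing: "\<And>f x. x \<notin> X \<Longrightarrow> T f x = 0"
    and linear: "\<And>f g a b i. T (\<lambda>x. a * f x + b * g x) (line_simplex i) =
      a * T f (line_simplex i) + b * T g (line_simplex i)"
    and banded: "\<And>f i. \<bar>T f (line_simplex i)\<bar> \<le> C * (\<Sum>j=i-int w..i+int w. \<bar>f (line_simplex j)\<bar>)"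
  shows "bounded_op T"
proof -
  define K where "K = C\<^sup>2 * (2 * real w + 1)"
  have square_sum_le: "(\<Sum>\<^sub>\<infinity>x\<in>X. (T f x)\<^sup>2) \<le> K * (2 * real w + 1) * (\<Sum>\<^sub>\<infinity>x\<in>X. (f x)\<^sup>2)"
    and square_summable: "(\<lambda>x. (T f x)\<^sup>2) summable_on X"
    if "f \<in> ell2X" for f
  proof -
    define G where "G i = (f (line_simplex i))\<^sup>2" for i
    have G: "G summable_on UNIV"
      using that by (simp add: ell2X_def summable_on_X_iff G_def[abs_def])
    have pointwise: "(T f (line_simplex i))\<^sup>2 \<le> K * (\<Sum>j=i-int w..i+int w. G j)" for i
    proof -
      have "(T f (line_simplex i))\<^sup>2 = \<bar>T f (line_simplex i)\<bar>\<^sup>2"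
        by simp
      also have "\<dots> \<le> (C * (\<Sum>j=i-int w..i+int w. \<bar>f (line_simplex j)\<bar>))\<^sup>2"
        by (rule power_mono[OF banded]) simp
      also have "\<dots> = C\<^sup>2 * (\<Sum>j=i-int w..i+int w. \<bar>f (line_simplex j)\<bar>)\<^sup>2"
        by (simp add: power_mult_distrib)
      also have "\<dots> \<le> C\<^sup>2 * ((\<Sum>j=i-int w..i+int w. G j) * (2 * real w + 1))"
        using sum_squared_le_sum_of_squares[of "\<lambda>j. \<bar>f (line_simplex j)\<bar>" "{i-int w..i+int w}"]
        by (intro mult_left_mono) (simp_all add: G_def nat_add_distrib add.commute)
      finally show ?thesis
        by (simp add: K_def algebra_simps)
    qed
    have window: "(\<lambda>i. K * (\<Sum>j=i-int w..i+int w. G j)) summable_on UNIV"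
      by (intro summable_on_cmult_right window_sum_summable_on G)
    have summable: "(\<lambda>i. (T f (line_simplex i))\<^sup>2) summable_on UNIV"
      by (rule summable_on_comparison_test[OF window]) (simp_all add: pointwise)
    then show "(\<lambda>x. (T f x)\<^sup>2) summable_on X"
      by (simp add: summable_on_X_iff)
    have "(\<Sum>\<^sub>\<infinity>i. (T f (line_simplex i))\<^sup>2) \<le> (\<Sum>\<^sub>\<infinity>i. K * (\<Sum>j=i-int w..i+int w. G j))"
      by (rule infsum_mono[OF summable window pointwise])
    also have "\<dots> = K * (2 * real w + 1) * (\<Sum>\<^sub>\<infinity>i. G i)"
      by (simp add: infsum_cmult_right window_sum_summable_on G)
    finally show "(\<Sum>\<^sub>\<infinity>x\<in>X. (T f x)\<^sup>2) \<le> K * (2 * real w + 1) * (\<Sum>\<^sub>\<infinity>x\<in>X. (f x)\<^sup>2)"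
      by (simp add: infsum_X G_def)
  qed
  have "ell2_norm (T f) \<le> \<bar>C\<bar> * (2 * real w + 1) * ell2_norm f" if "f \<in> ell2X" for f
  proof -
    have "ell2_norm (T f) \<le> sqrt (K * (2 * real w + 1) * (\<Sum>\<^sub>\<infinity>x\<in>X. (f x)\<^sup>2))"
      unfolding ell2_norm_def using square_sum_le[OF that] by simp
    also have "\<dots> = \<bar>C\<bar> * (2 * real w + 1) * ell2_norm f"
      by (simp add: K_def ell2_norm_def real_sqrt_mult power2_eq_square)
    finally show ?thesis .
  qed
  moreover have "T (\<lambda>x. a * f x + b * g x) = (\<lambda>x. a * T f x + b * T g x)" for f g a b
  proof
    fix x show "T (\<lambda>x. a * f x + b * g x) x = a * T f x + b * T g x"
      by (cases "x \<in> X") (auto elim: X_line_simplexE simp: linear vanishing)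
  qed
  ultimately show ?thesis
    using square_summable vanishing unfolding bounded_op_def ell2X_def by blast
qed

definition L_seq :: "(int \<Rightarrow> real) \<Rightarrow> int \<Rightarrow> real" where
  "L_seq F i = (if odd i then F (i - 2) else 0) + F (i - 1) + F i + F (i + 1) +
    (if odd i then F (i + 2) else 0)"

definition L_seq_inv :: "(int \<Rightarrow> real) \<Rightarrow> int \<Rightarrow> real" where
  "L_seq_inv F i = (if odd i then 0 else - F (i - 2)) + F (i - 1) - F i + F (i + 1) +
    (if odd i then 0 else - F (i + 2))"

lemma L_seq_inv_L_seq: "L_seq_inv (L_seq F) = F"
proof
  fix i show "L_seq_inv (L_seq F) i = F i"
    by (cases "even i") (simp_all add: L_seq_def L_seq_inv_def algebra_simps)
qed

lemma L_seq_L_seq_inv: "L_seq (L_seq_inv F) = F"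
proof
  fix i show "L_seq (L_seq_inv F) i = F i"
    by (cases "even i") (simp_all add: L_seq_def L_seq_inv_def algebra_simps)
qed

lemma L_seq_linear: "L_seq (\<lambda>j. a * F j + b * G j) i = a * L_seq F i + b * L_seq G i"
  by (simp add: L_seq_def algebra_simps)

lemma L_seq_inv_linear: "L_seq_inv (\<lambda>j. a * F j + b * G j) i = a * L_seq_inv F i + b * L_seq_inv G i"
  by (simp add: L_seq_inv_def algebra_simps)

lemma abs_L_seq_le: "\<bar>L_seq F i\<bar> \<le> (\<Sum>j=i-2..i+2. \<bar>F j\<bar>)"
  by (simp add: L_seq_def sum_int_window_2) linarith

lemma abs_L_seq_inv_le: "\<bar>L_seq_inv F i\<bar> \<le> (\<Sum>j=i-2..i+2. \<bar>F j\<bar>)"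
  by (simp add: L_seq_inv_def sum_int_window_2) linarith

lemma mat_app_outside_X: "x \<notin> X \<Longrightarrow> mat_app M f x = 0"
  by (simp add: mat_app_def)

lemma mat_app_Lmat_line_simplex: "mat_app Lmat f (line_simplex i) = L_seq (f \<circ> line_simplex) i"
proof -
  have "mat_app Lmat f (line_simplex i) =
      (\<Sum>j=i-2..i+2. Lmat (line_simplex i) (line_simplex j) * f (line_simplex j))"
    unfolding mat_app_def
    by (simp only: line_simplex_in_X if_True) (rule infsum_X_banded, simp add: Lmat_line_simplex)
  then show ?thesis
    by (simp add: sum_int_window_2 Lmat_line_simplex L_seq_def)
qed

lemma mat_app_absH_line_simplex: "mat_app absH f (line_simplex i) =
    f (line_simplex (i - 2)) + 2 * f (line_simplex i) + f (line_simplex (i + 2))"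
proof -
  have "mat_app absH f (line_simplex i) =
      (\<Sum>j=i-2..i+2. absH (line_simplex i) (line_simplex j) * f (line_simplex j))"
    unfolding mat_app_def
    by (simp only: line_simplex_in_X if_True) (rule infsum_X_banded, simp add: absH_line_simplex)
  then show ?thesis
    by (simp add: sum_int_window_2 absH_line_simplex)
qed

lemma mat_app_Lmat_minus_absH_line_simplex:
  "mat_app Lmat f (line_simplex i) - mat_app absH f (line_simplex i) = L_seq_inv (f \<circ> line_simplex) i"
  by (simp add: mat_app_Lmat_line_simplex mat_app_absH_line_simplex L_seq_def L_seq_inv_def)

lemma line_simplex_ext:
  assumes "\<And>x. x \<notin> X \<Longrightarrow> g x = h x" and "g \<circ> line_simplex = h \<circ> line_simplex"
  shows "g = h"
proof
  fix x show "g x = h x"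
    using assms by (cases "x \<in> X") (auto elim!: X_line_simplexE dest: fun_cong)
qed

theorem mainTheorem8:
  shows "bounded_op (mat_app Lmat) \<and>
    (\<exists>Linv. bounded_op Linv \<and>
       (\<forall>f\<in>ell2X. Linv (mat_app Lmat f) = f \<and> mat_app Lmat (Linv f) = f) \<and>
       (\<forall>f\<in>ell2X. mat_app absH f = (\<lambda>x. mat_app Lmat f x - Linv f x)))"
proof -
  define Linv where "Linv f x = mat_app Lmat f x - mat_app absH f x" for f x
  have L_comp: "mat_app Lmat f \<circ> line_simplex = L_seq (f \<circ> line_simplex)" for f
    by (simp add: fun_eq_iff mat_app_Lmat_line_simplex)
  have Linv_comp: "Linv f \<circ> line_simplex = L_seq_inv (f \<circ> line_simplex)" for f
    by (simp add: fun_eq_iff Linv_def mat_app_Lmat_minus_absH_line_simplex)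
  have "bounded_op (mat_app Lmat)"
    by (rule bounded_op_banded[where C = 1 and w = 2])
      (simp_all add: mat_app_outside_X mat_app_Lmat_line_simplex o_def L_seq_linear abs_L_seq_le)
  moreover have "bounded_op Linv"
    by (rule bounded_op_banded[where C = 1 and w = 2])
      (simp_all add: Linv_def mat_app_outside_X mat_app_Lmat_minus_absH_line_simplex o_def
        L_seq_inv_linear abs_L_seq_inv_le)
  moreover have "Linv (mat_app Lmat f) = f \<and> mat_app Lmat (Linv f) = f" if "f \<in> ell2X" for f
    using that by (intro conjI line_simplex_ext)
      (simp_all add: Linv_def mat_app_outside_X ell2X_def L_comp Linv_comp L_seq_inv_L_seq L_seq_L_seq_inv)
  ultimately show ?thesis
    by (auto simp: Linv_def)
qed

end
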